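(* Let $f\in\mathbf C\{x\}[y]$ be a reduced distinguished polynomial of degree $n\ge2$, written $f=\prod_{i=1}^n(y-a_i)$ with $\sum_ia_i=0$. Then for every $w\in\mathcal E\cap\mathcal O$, $$\mathrm{val}(w)\ge n\delta\rho(w)-\sup\{m_i:1\le i\le n\}.$$ In particular $\mathcal E\cap\mathcal O_q\subset\mathcal E_0$ as soon as $q\ge\sup_i m_i/(n\delta)$.
   Context: Distinguished: monic in $y$ with $f(0,y)=y^n$; the $a_i$ are pairwise distinct Puiseux series in $\overline K=\bigcup_{e\ge1}\mathbf C[[x^{1/e}]][1/x]$ with valuation $\nu$. $m_{i,j}=\nu(a_i-a_j)$, $m_i=\sum_{j\ne i}m_{i,j}$, $\delta=\inf_i\nu(a_i)$ ($>0$). $\mathcal O=\mathbf C\{x,y\}$. $\varepsilon_i=\prod_{j\ne i}(y-a_j)$; for $w=\sum w_i\varepsilon_i$ of degree $<n$, $\mathrm{val}(w)=\inf\nu(w_i)$. $\mathcal E$ is the $\mathbf C((x))$-space of polynomials in $y$ of degree $<n$, $\mathcal E_0=\{w\in\mathcal E:\mathrm{val}(w)\ge0\}$. For $w=\sum w_{k,l}x^ky^l\in\mathcal O$ nonzero, $\rho(w)=\inf\{k/(n\delta)+l/n:w_{k,l}\ne0\}$, and $\mathcal O_q=\{w\in\mathcal O:\rho(w)\ge q\}$ (with $\rho(0)=+\infty$). *)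

theory Defs
  imports "HOL-Analysis.FPS_Convergence"
          "HOL-Computational_Algebra.Formal_Laurent_Series"
          "HOL-Computational_Algebra.Polynomial"
begin

text \<open>Puiseux series with common ramification index e are modelled as formal Laurent
  series in t = x^(1/e).  pull e maps a power series c(x) to c(t^e).\<close>

definition pull :: "nat \<Rightarrow> complex fps \<Rightarrow> complex fls" where
  "pull e c = fps_to_fls (Abs_fps (\<lambda>j. if e dvd j then c $ (j div e) else 0))"

definition nu :: "nat \<Rightarrow> complex fls \<Rightarrow> ereal" where
  "nu e b = (if b = 0 then \<infinity> else ereal (real_of_int (fls_subdegree b) / real e))"

definition eps :: "nat \<Rightarrow> (nat \<Rightarrow> complex fls) \<Rightarrow> nat \<Rightarrow> complex fls poly" where
  "eps n a i = (\<Prod>j\<in>{..<n} - {i}. [:- a j, 1:])"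

definition mm :: "nat \<Rightarrow> nat \<Rightarrow> (nat \<Rightarrow> complex fls) \<Rightarrow> nat \<Rightarrow> ereal" where
  "mm e n a i = (\<Sum>j\<in>{..<n} - {i}. nu e (a i - a j))"

definition delta :: "nat \<Rightarrow> nat \<Rightarrow> (nat \<Rightarrow> complex fls) \<Rightarrow> ereal" where
  "delta e n a = Min ((\<lambda>i. nu e (a i)) ` {..<n})"

text \<open>val(w) = inf nu(w_i), where w = sum w_i eps_i (decomposition in Kbar[y]).\<close>
definition val_E :: "nat \<Rightarrow> nat \<Rightarrow> (nat \<Rightarrow> complex fls) \<Rightarrow> complex fps poly \<Rightarrow> ereal" where
  "val_E e n a w =
     (let c = (THE c. (\<forall>i. n \<le> i \<longrightarrow> c i = 0) \<and>
                 map_poly (pull e) w = (\<Sum>i<n. smult (c i) (eps n a i)))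
      in Min ((\<lambda>i. nu e (c i)) ` {..<n}))"

definition rho :: "nat \<Rightarrow> real \<Rightarrow> complex fps poly \<Rightarrow> ereal" where
  "rho n d w = Inf {ereal (real k / (real n * d) + real l / real n) | k l. coeff w l $ k \<noteq> 0}"

definition conv_fps :: "complex fps \<Rightarrow> bool" where
  "conv_fps c \<longleftrightarrow> fps_conv_radius c > 0"

end

theory Submission
  imports Defs
begin

text \<open>
  Write \<open>w = \<Sum>\<^sub>i w\<^sub>i \<epsilon>\<^sub>i\<close>. Since the \<open>\<epsilon>\<^sub>i\<close> form the Lagrange basis for the nodes \<open>a\<^sub>i\<close>,
  \<open>w\<^sub>i = w(a\<^sub>i) / \<epsilon>\<^sub>i(a\<^sub>i)\<close>, and \<open>\<nu>(\<epsilon>\<^sub>i(a\<^sub>i)) = m\<^sub>i\<close>. A monomial \<open>x\<^sup>k y\<^sup>l\<close> of \<open>w\<close> evaluated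
  at \<open>a\<^sub>i\<close> has valuation \<open>k + l \<nu>(a\<^sub>i) \<ge> k + l \<delta> \<ge> n \<delta> \<rho>(w)\<close>, hence \<open>\<nu>(w(a\<^sub>i)) \<ge> n \<delta> \<rho>(w)\<close>
  and \<open>\<nu>(w\<^sub>i) \<ge> n \<delta> \<rho>(w) - m\<^sub>i\<close>. That \<open>\<delta>\<close> is positive and finite comes from \<open>f\<close> being
  distinguished: a nonzero root of a monic polynomial whose other coefficients have positive
  valuation has positive valuation, as otherwise \<open>y\<^sup>n\<close> would be the unique dominant term.
\<close>

unbundle fps_syntax

definition fls_vanishes_below :: "int \<Rightarrow> 'a::zero fls \<Rightarrow> bool" where
  "fls_vanishes_below N f \<longleftrightarrow> (\<forall>k<N. f $$ k = 0)"

lemma fls_vanishes_below_iff: "fls_vanishes_below N f \<longleftrightarrow> f = 0 \<or> N \<le> fls_subdegree f"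
  unfolding fls_vanishes_below_def by (auto intro: fls_subdegree_geI)

lemma fls_vanishes_below_sum:
  "(\<And>x. x \<in> A \<Longrightarrow> fls_vanishes_below N (g x)) \<Longrightarrow> fls_vanishes_below N (\<Sum>x\<in>A. g x)"
  unfolding fls_vanishes_below_def by (simp add: fls_nth_sum)

lemma fls_subdegree_root_pos:
  fixes F :: "'a::idom fls poly"
  assumes monic: "lead_coeff F = 1"
    and coeffs: "\<forall>k<degree F. fls_vanishes_below 1 (coeff F k)"
    and root: "poly F x = 0" and "x \<noteq> 0"
  shows "0 < fls_subdegree x"
proof (rule ccontr)
  define n s where "n = degree F" and "s = fls_subdegree x"
  assume "\<not> 0 < fls_subdegree x"
  then have "s \<le> 0" unfolding s_def by simp
  have "poly F x = (\<Sum>k<n. coeff F k * x ^ k) + x ^ n"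
    unfolding poly_altdef n_def using monic by (simp add: lessThan_Suc_atMost[symmetric])
  then have lower: "(\<Sum>k<n. coeff F k * x ^ k) = - (x ^ n)"
    using root by (simp add: eq_neg_iff_add_eq_0)
  \<comment> \<open>every lower term has subdegree at least \<open>1 + k s \<ge> 1 + n s\<close>, beyond that of \<open>x ^ n\<close>\<close>
  have "fls_vanishes_below (int n * s + 1) (\<Sum>k<n. coeff F k * x ^ k)"
  proof (rule fls_vanishes_below_sum)
    fix k assume k: "k \<in> {..<n}"
    have "int n * s \<le> int k * s" using k \<open>s \<le> 0\<close> by (intro mult_right_mono_neg) auto
    moreover have "coeff F k = 0 \<or> 1 \<le> fls_subdegree (coeff F k)"
      using coeffs k unfolding fls_vanishes_below_iff n_def by auto
    moreover have "coeff F k \<noteq> 0 \<Longrightarrow>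
        fls_subdegree (coeff F k * x ^ k) = fls_subdegree (coeff F k) + int k * s"
      using \<open>x \<noteq> 0\<close> unfolding s_def by (simp add: fls_subdegree_pow)
    ultimately show "fls_vanishes_below (int n * s + 1) (coeff F k * x ^ k)"
      unfolding fls_vanishes_below_iff by fastforce
  qed
  then show False
    using \<open>x \<noteq> 0\<close> unfolding lower fls_vanishes_below_iff s_def by (simp add: fls_subdegree_pow)
qed

lemma pull_nth:
  "pull e c $$ m = (if m < 0 then 0 else if e dvd nat m then c $ (nat m div e) else 0)"
  unfolding pull_def by simp

lemma pull_0 [simp]: "pull e 0 = 0"
  by (rule fls_eqI) (simp add: pull_nth)

lemma pull_1 [simp]: "0 < e \<Longrightarrow> pull e 1 = 1"
  by (rule fls_eqI) (auto simp: pull_nth)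

lemma pull_nth_subdegree: "0 < e \<Longrightarrow> pull e c $$ (int e * int (subdegree c)) = c $ subdegree c"
  by (simp add: pull_nth nat_mult_distrib mult_less_0_iff)

lemma pull_eq_0_iff [simp]: "0 < e \<Longrightarrow> pull e c = 0 \<longleftrightarrow> c = 0"
proof
  assume "0 < e" "pull e c = 0"
  show "c = 0"
  proof (rule ccontr)
    assume "c \<noteq> 0"
    then have "pull e c $$ (int e * int (subdegree c)) \<noteq> 0"
      using \<open>0 < e\<close> by (simp add: pull_nth_subdegree)
    then show False using \<open>pull e c = 0\<close> by simp
  qed
qed (simp only: pull_0)

lemma fls_subdegree_pull:
  assumes "0 < e" "c \<noteq> 0"
  shows "fls_subdegree (pull e c) = int e * int (subdegree c)"
proof (rule fls_subdegree_eqI)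
  show "pull e c $$ (int e * int (subdegree c)) \<noteq> 0"
    using assms by (simp add: pull_nth_subdegree)
next
  fix k assume k: "k < int e * int (subdegree c)"
  show "pull e c $$ k = 0"
  proof (cases "k < 0 \<or> \<not> e dvd nat k")
    case False
    then have "\<not> k < 0" "e dvd nat k" by blast+
    have "k < int (subdegree c * e)" using k by (simp add: mult_ac)
    then have "nat k < subdegree c * e" using \<open>\<not> k < 0\<close> by (subst nat_less_iff) simp_all
    then have "nat k div e < subdegree c" by (rule less_mult_imp_div_less)
    then have "c $ (nat k div e) = 0" by (rule nth_less_subdegree_zero)
    moreover have "pull e c $$ k = c $ (nat k div e)"
      using \<open>\<not> k < 0\<close> \<open>e dvd nat k\<close> by (simp only: pull_nth if_False if_True)
    ultimately show ?thesis by simp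
  next
    case True
    then show ?thesis by (cases "k < 0") (simp_all add: pull_nth)
  qed
qed

lemma fls_vanishes_below_pull:
  fixes c :: "complex fps"
  assumes "c $ 0 = 0"
  shows "fls_vanishes_below 1 (pull e c)"
  unfolding fls_vanishes_below_def
proof (intro allI impI)
  fix k :: int
  assume "k < 1"
  then consider "k < 0" | "k = 0" by linarith
  then show "pull e c $$ k = 0" using assms by cases (simp_all add: pull_nth)
qed

lemma degree_map_poly_pull [simp]: "0 < e \<Longrightarrow> degree (map_poly (pull e) p) = degree p"
  by (rule degree_map_poly) simp

lemma poly_eps: "poly (eps n a i) x = (\<Prod>j\<in>{..<n} - {i}. x - a j)"
  unfolding eps_def by (simp add: poly_prod)

lemma degree_eps_less:
  assumes "i < n"
  shows "degree (eps n a i) < n"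
proof -
  have "degree (eps n a i) \<le> card ({..<n} - {i})"
    unfolding eps_def using degree_prod_sum_le[of "{..<n} - {i}" "\<lambda>j. [:- a j, 1:]"] by simp
  then show ?thesis using assms by simp
qed

lemma poly_eps_other: "j < n \<Longrightarrow> j \<noteq> i \<Longrightarrow> poly (eps n a i) (a j) = 0"
  unfolding poly_eps by (rule prod_zero) auto

lemma poly_eps_self_nonzero: "inj_on a {..<n} \<Longrightarrow> i < n \<Longrightarrow> poly (eps n a i) (a i) \<noteq> 0"
  unfolding poly_eps by (auto simp: inj_on_def)

lemma poly_sum_smult_eps:
  "j < n \<Longrightarrow> poly (\<Sum>i<n. smult (c i) (eps n a i)) (a j) = c j * poly (eps n a j) (a j)"
  by (simp add: poly_sum sum.remove[of _ j] poly_eps_other)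

lemma eps_coordinates:
  fixes W :: "complex fls poly"
  assumes inj: "inj_on a {..<n}" and deg: "degree W < n"
  shows "(THE c. (\<forall>i. n \<le> i \<longrightarrow> c i = 0) \<and> W = (\<Sum>i<n. smult (c i) (eps n a i)))
     = (\<lambda>j. if j < n then poly W (a j) / poly (eps n a j) (a j) else 0)"
    (is "(THE c. ?P c) = ?c")
proof (rule the_equality)
  have card: "card (a ` {..<n}) = n" using inj by (simp add: card_image)
  have "degree (\<Sum>i<n. smult (?c i) (eps n a i)) < n"
    using deg by (intro degree_sum_less) (auto intro: le_less_trans[OF degree_smult_le] degree_eps_less)
  moreover have "poly W (a j) = poly (\<Sum>i<n. smult (?c i) (eps n a i)) (a j)" if "j < n" for j
    using that poly_eps_self_nonzero[OF inj that] by (subst poly_sum_smult_eps[OF that]) simp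
  ultimately have "W = (\<Sum>i<n. smult (?c i) (eps n a i))"
    using deg card by (intro poly_eqI_degree[where A = "a ` {..<n}"]) auto
  then show "?P ?c" by simp
next
  fix c assume P: "?P c"
  show "c = ?c"
  proof
    fix j show "c j = ?c j"
      using P poly_sum_smult_eps[of j n c a] poly_eps_self_nonzero[OF inj, of j]
      by (cases "j < n") auto
  qed
qed

lemma val_E_eq:
  assumes "0 < e" "inj_on a {..<n}" "degree w < n"
  shows "val_E e n a w =
    Min ((\<lambda>i. nu e (poly (map_poly (pull e) w) (a i) / poly (eps n a i) (a i))) ` {..<n})"
  using assms unfolding val_E_def Let_def by (subst eps_coordinates) auto

lemma nu_divide: "y \<noteq> 0 \<Longrightarrow> nu e (x / y) = nu e x - nu e y"
  by (cases "x = 0") (simp_all add: nu_def fls_divide_subdegree diff_divide_distrib)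

lemma nu_prod:
  "finite A \<Longrightarrow> (\<And>i. i \<in> A \<Longrightarrow> f i \<noteq> 0) \<Longrightarrow> nu e (\<Prod>i\<in>A. f i) = (\<Sum>i\<in>A. nu e (f i))"
  by (simp add: nu_def fls_subdegree_prod sum_divide_distrib prod_zero_iff)

lemma nu_poly_eps_self:
  assumes "inj_on a {..<n}" "i < n"
  shows "nu e (poly (eps n a i) (a i)) = mm e n a i"
  using assms unfolding poly_eps mm_def by (subst nu_prod) (auto simp: inj_on_def)

lemma rho_le: "coeff w l $ k \<noteq> 0 \<Longrightarrow> rho n d w \<le> ereal (real k / (real n * d) + real l / real n)"
  unfolding rho_def by (rule Inf_lower) blast

lemma rho_nonneg: "0 \<le> d \<Longrightarrow> 0 \<le> rho n d w"
  unfolding rho_def by (rule Inf_greatest) auto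

lemma nu_poly_pull_ge:
  fixes w :: "complex fps poly" and D r :: real
  assumes e: "0 < e" and x: "ereal D \<le> nu e x"
    and bound: "\<And>k l. coeff w l $ k \<noteq> 0 \<Longrightarrow> r \<le> real k + real l * D"
  shows "ereal r \<le> nu e (poly (map_poly (pull e) w) x)"
proof -
  have summand: "fls_vanishes_below \<lceil>real e * r\<rceil> (pull e (coeff w l) * x ^ l)" for l
  proof (cases "coeff w l = 0 \<or> x ^ l = 0")
    case False
    then have cl: "coeff w l \<noteq> 0" and xl: "x ^ l \<noteq> 0" by auto
    define k where "k = subdegree (coeff w l)"
    have "r \<le> real k + real l * D" using bound cl unfolding k_def by simp
    then have "real e * r \<le> real e * (real k + real l * D)" by (rule mult_left_mono) simp
    moreover have "real l * (real e * D) \<le> real l * of_int (fls_subdegree x)"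
    proof (cases "l = 0")
      case False
      then have "x \<noteq> 0" using xl by auto
      then have "real e * D \<le> of_int (fls_subdegree x)" using x e by (simp add: nu_def field_simps)
      then show ?thesis by (rule mult_left_mono) simp
    qed simp
    moreover have "fls_subdegree (pull e (coeff w l) * x ^ l) = int e * int k + int l * fls_subdegree x"
      using cl xl e by (simp add: fls_subdegree_pull fls_subdegree_pow k_def)
    ultimately show ?thesis unfolding fls_vanishes_below_iff by (simp add: ceiling_le_iff algebra_simps)
  qed (auto simp: fls_vanishes_below_iff)
  have "poly (map_poly (pull e) w) x = (\<Sum>l\<le>degree w. pull e (coeff w l) * x ^ l)"
    using e by (simp add: poly_altdef coeff_map_poly)
  then have "fls_vanishes_below \<lceil>real e * r\<rceil> (poly (map_poly (pull e) w) x)"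
    using summand by (simp add: fls_vanishes_below_sum)
  then show ?thesis
    using e by (auto simp: fls_vanishes_below_iff nu_def ceiling_le_iff field_simps)
qed

lemma nu_poly_pull_ge_rho:
  assumes "0 < e" "0 < D" "0 < n" "ereal D \<le> nu e x"
  shows "ereal (real n) * ereal D * rho n D w \<le> nu e (poly (map_poly (pull e) w) x)"
proof (cases "w = 0")
  case False
  then obtain l where "coeff w l \<noteq> 0" by (metis leading_coeff_0_iff)
  then have "rho n D w \<le> ereal (real (subdegree (coeff w l)) / (real n * D) + real l / real n)"
    by (intro rho_le) simp
  then obtain R where R: "rho n D w = ereal R"
    using rho_nonneg[of D n w] assms(2) by (cases "rho n D w") auto
  have "real n * D * R \<le> real k + real l * D" if "coeff w l $ k \<noteq> 0" for k l
  proof -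
    have "R \<le> real k / (real n * D) + real l / real n"
      using rho_le[where n = n and d = D, OF that] R by simp
    then have "real n * D * R \<le> real n * D * (real k / (real n * D) + real l / real n)"
      using assms by (intro mult_left_mono) auto
    also have "\<dots> = real k + real l * D" using assms by (simp add: field_simps)
    finally show ?thesis .
  qed
  then show ?thesis using nu_poly_pull_ge[of e D x w "real n * D * R"] assms R by simp
qed (simp add: nu_def)

lemma nu_root_pos:
  fixes f :: "complex fps poly"
  assumes e: "0 < e" and monic: "lead_coeff f = 1" and deg: "degree f = n"
    and distinguished: "\<forall>k<n. coeff f k $ 0 = 0"
    and fact: "map_poly (pull e) f = (\<Prod>i<n. [:- a i, 1:])" and i: "i < n"
  shows "0 < nu e (a i)"
proof (cases "a i = 0")
  case False
  have "poly (map_poly (pull e) f) (a i) = 0"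
    unfolding fact poly_prod using i by (intro prod_zero) auto
  moreover have "\<forall>k<degree (map_poly (pull e) f). fls_vanishes_below 1 (coeff (map_poly (pull e) f) k)"
    using distinguished deg e by (simp add: coeff_map_poly fls_vanishes_below_pull)
  ultimately have "0 < fls_subdegree (a i)"
    using False monic deg e by (intro fls_subdegree_root_pos) (simp_all add: coeff_map_poly)
  then show ?thesis using False e by (simp add: nu_def)
qed (simp add: nu_def)

lemma delta_le_nu: "i < n \<Longrightarrow> delta e n a \<le> nu e (a i)"
  unfolding delta_def by (rule Min_le) auto

lemma delta_pos_finite:
  fixes f :: "complex fps poly"
  assumes "2 \<le> n" "0 < e" "lead_coeff f = 1" "degree f = n" "\<forall>k<n. coeff f k $ 0 = 0"
    and inj: "inj_on a {..<n}" and "map_poly (pull e) f = (\<Prod>i<n. [:- a i, 1:])"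
  obtains D where "delta e n a = ereal D" "0 < D"
proof -
  have "0 < delta e n a"
    unfolding delta_def using assms(1) nu_root_pos[OF assms(2-5,7)]
    by (subst Min_gr_iff) (auto simp: lessThan_empty_iff)
  moreover have "delta e n a < \<infinity>"
  proof -
    have "a 0 \<noteq> a 1" using inj_onD[OF inj, of 0 1] assms(1) by auto
    obtain i where "i < n" "a i \<noteq> 0"
    proof (cases "a 0 = 0")
      case True
      then show ?thesis using that[of 1] \<open>a 0 \<noteq> a 1\<close> assms(1) by simp
    next
      case False
      then show ?thesis using that[of 0] assms(1) by simp
    qed
    then show ?thesis using delta_le_nu[of i n e a] by (auto simp: nu_def)
  qed
  ultimately show ?thesis using that by (cases "delta e n a") auto
qed

lemma val_E_ge:
  assumes e: "0 < e" and D: "0 < D" and inj: "inj_on a {..<n}" and deg: "degree w < n"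
    and roots: "\<forall>i<n. ereal D \<le> nu e (a i)"
  shows "ereal (real n) * ereal D * rho n D w - Max (mm e n a ` {..<n}) \<le> val_E e n a w"
proof -
  have "0 < n" using deg by simp
  have "ereal (real n) * ereal D * rho n D w - Max (mm e n a ` {..<n})
      \<le> nu e (poly (map_poly (pull e) w) (a i) / poly (eps n a i) (a i))" if i: "i < n" for i
  proof -
    have "mm e n a i \<le> Max (mm e n a ` {..<n})" using i by (intro Max_ge) auto
    then have "ereal (real n) * ereal D * rho n D w - Max (mm e n a ` {..<n})
        \<le> nu e (poly (map_poly (pull e) w) (a i)) - mm e n a i"
      using e D \<open>0 < n\<close> roots i by (intro ereal_minus_mono nu_poly_pull_ge_rho) auto
    also have "\<dots> = nu e (poly (map_poly (pull e) w) (a i) / poly (eps n a i) (a i))"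
      using poly_eps_self_nonzero[OF inj i] by (simp add: nu_divide nu_poly_eps_self[OF inj i])
    finally show ?thesis .
  qed
  then show ?thesis unfolding val_E_eq[OF e inj deg] using \<open>0 < n\<close> by (subst Min_ge_iff) auto
qed

lemma Max_mm_finite:
  assumes "inj_on a {..<n}" "0 < n"
  obtains M where "Max (mm e n a ` {..<n}) = ereal M"
proof -
  have "Max (mm e n a ` {..<n}) \<in> mm e n a ` {..<n}"
    using assms(2) by (intro Max_in) auto
  then obtain i where i: "i < n" "Max (mm e n a ` {..<n}) = mm e n a i" by auto
  then have "Max (mm e n a ` {..<n}) = nu e (poly (eps n a i) (a i))"
    using nu_poly_eps_self[OF assms(1)] by simp
  then show ?thesis using that poly_eps_self_nonzero[OF assms(1) i(1)] by (simp add: nu_def)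
qed

lemma ereal_mult_minus_nonneg:
  fixes r :: ereal
  assumes "0 < c" "ereal M / ereal c \<le> ereal q" "ereal q \<le> r"
  shows "0 \<le> ereal c * r - ereal M"
proof -
  have "ereal M \<le> ereal c * ereal q" using assms(1,2) by (simp add: divide_le_eq mult.commute)
  also have "\<dots> \<le> ereal c * r" using assms(1,3) by (intro ereal_mult_left_mono) auto
  finally show ?thesis using assms(1) by (cases r) auto
qed

theorem mainTheorem17:
  fixes f :: "complex fps poly" and n e :: nat and a :: "nat \<Rightarrow> complex fls"
  assumes n2: "n \<ge> 2"
    and e_pos: "e > 0"
    and f_conv: "\<forall>k. conv_fps (coeff f k)"
    and f_monic: "lead_coeff f = 1" and f_deg: "degree f = n"
    and f_dist: "\<forall>k<n. coeff f k $ 0 = 0"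
    and a_distinct: "inj_on a {..<n}"
    and f_fact: "map_poly (pull e) f = (\<Prod>i<n. [:- a i, 1:])"
    and sum0: "(\<Sum>i<n. a i) = 0"
  shows "(\<forall>w. degree w < n \<and> (\<forall>l. conv_fps (coeff w l)) \<longrightarrow>
            val_E e n a w \<ge> ereal (real n) * delta e n a * rho n (real_of_ereal (delta e n a)) w
                              - Max (mm e n a ` {..<n}))
       \<and> (\<forall>q. ereal q \<ge> Max (mm e n a ` {..<n}) / (ereal (real n) * delta e n a) \<longrightarrow>
            (\<forall>w. degree w < n \<and> (\<forall>l. conv_fps (coeff w l)) \<and>
                 rho n (real_of_ereal (delta e n a)) w \<ge> ereal q \<longrightarrow> val_E e n a w \<ge> 0))"
proof -
  obtain D where D: "delta e n a = ereal D" "0 < D"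
    using delta_pos_finite[OF n2 e_pos f_monic f_deg f_dist a_distinct f_fact] .
  have roots: "\<forall>i<n. ereal D \<le> nu e (a i)" using delta_le_nu[of _ n e a] D(1) by simp
  have "0 < n" using n2 by simp
  then obtain M where M: "Max (mm e n a ` {..<n}) = ereal M"
    using Max_mm_finite[OF a_distinct] by blast
  have bound: "ereal (real n) * ereal D * rho n D w - ereal M \<le> val_E e n a w" if "degree w < n" for w
    using val_E_ge[OF e_pos D(2) a_distinct that roots] M by simp
  have nonneg: "0 \<le> val_E e n a w"
    if "ereal M / (ereal (real n) * ereal D) \<le> ereal q" "ereal q \<le> rho n D w" "degree w < n" for q w
  proof -
    have "0 \<le> ereal (real n * D) * rho n D w - ereal M"
      using that \<open>0 < n\<close> D(2) by (intro ereal_mult_minus_nonneg[of _ _ q]) auto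
    then show ?thesis using bound[OF that(3)] by (simp add: mult.assoc)
  qed
  show ?thesis unfolding D(1) M using bound nonneg by simp
qed

end
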